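(* Let $\delta\in(0,1]$, let $a_0\ge0$ and $a_1,a_2,\dots,a_T\ge0$, and let $f:[0,\infty)\to[0,\infty)$ be non-increasing. Then $$\sum_{t=1}^T\sum_{i=0}^{t-1}(1-\delta)^i\,a_{t-i:t}\,f(a_{0:t})\le\frac{1}{\delta^2}\int_{a_0}^{a_{0:T}}f(x)\,dx.$$
   Context: For a sequence $(a_s)$, $a_{m:n}=\sum_{s=m}^na_s$. *)

theory Defs
  imports "HOL-Analysis.Analysis"
begin

end

theory Submission
  imports Defs
begin

text \<open>Put \<open>q = 1 - \<delta>\<close> and \<open>A t = a 0 + \<dots> + a t\<close>. Exchanging the order of summation,
  \<open>a s\<close> enters the \<open>t\<close>-th summand with weight \<open>\<Sum>i\<ge>t-s. q ^ i \<le> q ^ (t - s) / \<delta>\<close>, and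
  \<open>f (A t) \<le> f (A s)\<close> since \<open>f\<close> is non-increasing. Summing the geometric factors
  \<open>q ^ (t - s)\<close> over \<open>t \<ge> s\<close> costs a second factor \<open>1 / \<delta>\<close>, and what remains,
  \<open>\<Sum>s. a s * f (A s)\<close>, is a right-endpoint Riemann sum of the non-increasing \<open>f\<close> on
  \<open>[A 0, A T]\<close>, hence at most its integral.\<close>

lemma sum_triangle_swap:
  fixes g :: "nat \<Rightarrow> nat \<Rightarrow> 'a::comm_monoid_add"
  shows "(\<Sum>r=m..n. \<Sum>s=r..n. g r s) = (\<Sum>s=m..n. \<Sum>r=m..s. g r s)"
proof (induction n)
  case (Suc n)
  then show ?case
    by (cases "m \<le> Suc n") (auto simp: sum.cl_ivl_Suc sum.distrib)
qed (cases m; simp)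

lemma sum_power_inj_le:
  fixes q :: real
  assumes "0 \<le> q" "q < 1" "finite S" "inj_on h S"
  shows "(\<Sum>x\<in>S. q ^ h x) \<le> 1 / (1 - q)"
proof -
  have "(\<Sum>x\<in>S. q ^ h x) = (\<Sum>k\<in>h ` S. q ^ k)"
    using assms(4) by (simp add: sum.reindex)
  also have "\<dots> \<le> (\<Sum>k. q ^ k)"
    using assms by (intro sum_le_suminf summable_geometric) auto
  also have "\<dots> = 1 / (1 - q)"
    using assms by (intro suminf_geometric) auto
  finally show ?thesis .
qed

lemma integrable_on_antimono_on:
  fixes f :: "real \<Rightarrow> real"
  assumes "antimono_on {a..b} f"
  shows "f integrable_on {a..b}"
proof -
  have "mono_on {a..b} (\<lambda>x. - f x)"
    using assms by (auto simp: monotone_on_def)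
  then have "(\<lambda>x. - (- f x)) integrable_on {a..b}"
    by (intro integrable_neg integrable_on_mono_on)
  then show ?thesis by simp
qed

lemma right_riemann_sum_le_integral:
  fixes x :: "nat \<Rightarrow> real" and f :: "real \<Rightarrow> real"
  assumes "mono_on {..n} x" and "antimono_on {x 0..x n} f"
  shows "(\<Sum>s=1..n. (x s - x (s - 1)) * f (x s)) \<le> integral {x 0..x n} f"
  using assms
proof (induction n)
  case (Suc n)
  have le0: "x 0 \<le> x n" and leS: "x n \<le> x (Suc n)"
    using monotone_onD[OF Suc.prems(1)] by auto
  have f_Suc: "antimono_on {x 0..x (Suc n)} f" using Suc.prems(2) .
  have "(\<Sum>s=1..n. (x s - x (s - 1)) * f (x s)) \<le> integral {x 0..x n} f"
    using Suc.prems le0 leS by (intro Suc.IH) (auto elim!: monotone_on_subset)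
  moreover have "(x (Suc n) - x n) * f (x (Suc n)) \<le> integral {x n..x (Suc n)} f"
  proof -
    have "(x (Suc n) - x n) * f (x (Suc n)) = integral {x n..x (Suc n)} (\<lambda>_. f (x (Suc n)))"
      using leS by simp
    also have "\<dots> \<le> integral {x n..x (Suc n)} f"
      using le0 leS monotone_onD[OF f_Suc] f_Suc
      by (intro integral_le[OF integrable_const_ivl integrable_on_antimono_on])
        (auto elim!: monotone_on_subset)
    finally show ?thesis .
  qed
  moreover have "integral {x 0..x n} f + integral {x n..x (Suc n)} f = integral {x 0..x (Suc n)} f"
    using le0 leS integrable_on_antimono_on[OF f_Suc]
    by (intro Henstock_Kurzweil_Integration.integral_combine) (auto elim!: monotone_on_subset)
  ultimately show ?case by simp
qed simp

lemma discounted_window_sum_le: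
  fixes q :: real and a :: "nat \<Rightarrow> real"
  assumes "0 \<le> q" "q < 1" "1 \<le> t" "\<And>s. s \<in> {1..t} \<Longrightarrow> 0 \<le> a s"
  shows "(\<Sum>i=0..t-1. q ^ i * (\<Sum>s=t-i..t. a s)) \<le> (\<Sum>s=1..t. q ^ (t - s) * a s) / (1 - q)"
proof -
  have "(\<Sum>i=0..t-1. q ^ i * (\<Sum>s=t-i..t. a s)) = (\<Sum>r=1..t. q ^ (t - r) * (\<Sum>s=r..t. a s))"
    using assms(3)
    by (intro sum.reindex_bij_witness[where i = "\<lambda>i. t - i" and j = "\<lambda>r. t - r"]) auto
  also have "\<dots> = (\<Sum>s=1..t. (\<Sum>r=1..s. q ^ (t - r)) * a s)"
    by (simp add: sum_distrib_left sum_distrib_right sum_triangle_swap)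
  also have "\<dots> \<le> (\<Sum>s=1..t. q ^ (t - s) / (1 - q) * a s)"
  proof (intro sum_mono mult_right_mono)
    fix s assume s: "s \<in> {1..t}"
    have "(\<Sum>r=1..s. q ^ (t - r)) = q ^ (t - s) * (\<Sum>r=1..s. q ^ (s - r))"
      using s by (auto simp: sum_distrib_left simp flip: power_add intro!: sum.cong)
    also have "\<dots> \<le> q ^ (t - s) * (1 / (1 - q))"
      using assms(1,2) by (intro mult_left_mono sum_power_inj_le) (auto simp: inj_on_def)
    finally show "(\<Sum>r=1..s. q ^ (t - r)) \<le> q ^ (t - s) / (1 - q)" by simp
    show "0 \<le> a s" using assms(4) s .
  qed
  also have "\<dots> = (\<Sum>s=1..t. q ^ (t - s) * a s) / (1 - q)"
    by (simp add: sum_divide_distrib)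
  finally show ?thesis .
qed

lemma discounted_sum_le:
  fixes q :: real and c :: "nat \<Rightarrow> real"
  assumes "0 \<le> q" "q < 1" "\<And>s. s \<in> {1..T} \<Longrightarrow> 0 \<le> c s"
  shows "(\<Sum>t=1..T. \<Sum>s=1..t. q ^ (t - s) * c s) \<le> (\<Sum>s=1..T. c s) / (1 - q)"
proof -
  have "(\<Sum>t=1..T. \<Sum>s=1..t. q ^ (t - s) * c s) = (\<Sum>s=1..T. (\<Sum>t=s..T. q ^ (t - s)) * c s)"
    by (simp add: sum_triangle_swap [symmetric] sum_distrib_right)
  also have "\<dots> \<le> (\<Sum>s=1..T. 1 / (1 - q) * c s)"
    using assms
    by (intro sum_mono mult_right_mono sum_power_inj_le) (auto simp: inj_on_def)
  also have "\<dots> = (\<Sum>s=1..T. c s) / (1 - q)"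
    by (simp add: sum_divide_distrib)
  finally show ?thesis .
qed

theorem lemma4:
  fixes \<delta> :: real and a :: "nat \<Rightarrow> real" and f :: "real \<Rightarrow> real" and T :: nat
  assumes "0 < \<delta>" and "\<delta> \<le> 1"
    and "\<And>s. s \<le> T \<Longrightarrow> a s \<ge> 0"
    and "\<And>x. x \<ge> 0 \<Longrightarrow> f x \<ge> 0"
    and "\<And>x y. 0 \<le> x \<Longrightarrow> x \<le> y \<Longrightarrow> f y \<le> f x"
  shows "(\<Sum>t=1..T. \<Sum>i=0..t-1. (1 - \<delta>) ^ i * (\<Sum>s=t-i..t. a s) * f (\<Sum>s=0..t. a s))
         \<le> (1 / \<delta>\<^sup>2) * integral {a 0..(\<Sum>s=0..T. a s)} f"
proof -
  define q where "q = 1 - \<delta>"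
  define A where "A t = (\<Sum>s=0..t. a s)" for t
  define c where "c s = a s * f (A s)" for s
  have q: "0 \<le> q" "q < 1" "1 - q = \<delta>" using assms(1,2) by (auto simp: q_def)
  have A_mono: "mono_on {..T} A"
    using assms(3) by (auto intro!: monotone_onI sum_mono2 simp: A_def)
  have A_nonneg: "0 \<le> A t" if "t \<le> T" for t
    using assms(3) that by (auto intro!: sum_nonneg simp: A_def)
  have f_antimono: "f (A t) \<le> f (A s)" if "s \<le> t" "t \<le> T" for s t
    using assms(5) A_nonneg monotone_onD[OF A_mono] that by auto
  have "(\<Sum>t=1..T. \<Sum>i=0..t-1. (1 - \<delta>) ^ i * (\<Sum>s=t-i..t. a s) * f (\<Sum>s=0..t. a s))
      = (\<Sum>t=1..T. (\<Sum>i=0..t-1. q ^ i * (\<Sum>s=t-i..t. a s)) * f (A t))"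
    by (simp add: q_def A_def sum_distrib_right)
  also have "\<dots> \<le> (\<Sum>t=1..T. (\<Sum>s=1..t. q ^ (t - s) * a s) / \<delta> * f (A t))"
    using q assms(3,4) A_nonneg
    by (intro sum_mono mult_right_mono) (auto dest: discounted_window_sum_le[of q _ a])
  also have "\<dots> \<le> (\<Sum>t=1..T. \<Sum>s=1..t. q ^ (t - s) * c s) / \<delta>"
    unfolding sum_divide_distrib sum_distrib_right c_def
    using q assms(1,3) f_antimono
    by (intro sum_mono) (auto intro!: mult_left_mono divide_right_mono simp: mult.assoc)
  also have "\<dots> \<le> (\<Sum>s=1..T. c s) / \<delta> / \<delta>"
    using discounted_sum_le[of q T c] q assms(1,3,4) A_nonneg
    by (intro divide_right_mono) (auto simp: c_def)
  also have "(\<Sum>s=1..T. c s) = (\<Sum>s=1..T. (A s - A (s - 1)) * f (A s))"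
    by (intro sum.cong) (auto simp: c_def A_def Suc_le_eq gr0_conv_Suc)
  also have "\<dots> \<le> integral {A 0..A T} f"
    using A_mono A_nonneg[of 0]
    by (intro right_riemann_sum_le_integral) (auto intro!: monotone_onI assms(5))
  finally show ?thesis
    using assms(1) by (simp add: A_def power2_eq_square divide_right_mono)
qed

end
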